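(* For every strongly regular graph $G=\mathrm{srg}(n,k,\lambda,\mu)$ with $\mu\ge1$, we have $\mathrm{QEC}(G)\ge0$, except when $G$ is the cycle $C_5=\mathrm{srg}(5,2,0,1)$, for which \[ \mathrm{QEC}(C_5)=-\frac{3-\sqrt5}{2}<0. \]
   Context: A graph $G=(V,E)$ is finite and simple. It is strongly regular with parameters $\mathrm{srg}(n,k,\lambda,\mu)$ if $|V|=n$, every vertex has exactly $k$ neighbours, every two adjacent vertices have exactly $\lambda$ common neighbours, and every two distinct non-adjacent vertices have exactly $\mu$ common neighbours. The hypothesis $\mu\ge1$ means in particular that there exist distinct non-adjacent vertices (so $G$ is not complete) and that $G$ is connected. For a connected graph $G=(V,E)$ with $|V|\ge2$, let $D=[d(x,y)]_{x,y\in V}$ be its distance matrix ($d$ the graph distance), and define the quadratic embedding constant \[ \mathrm{QEC}(G)=\max\{\langle f,Df\rangle : f\in\mathbb{R}^V,\ \langle f,f\rangle=1,\ \langle \mathbf{1},f\rangle=0\}, \] where $\mathbf 1$ is the all-ones vector and $\langle\cdot,\cdot\rangle$ the standard inner product. *)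

theory Defs
  imports Complex_Main
begin

definition simple_graph :: "'a set \<Rightarrow> ('a \<Rightarrow> 'a \<Rightarrow> bool) \<Rightarrow> bool" where
  "simple_graph V E \<longleftrightarrow> finite V \<and> (\<forall>x y. E x y \<longrightarrow> x \<in> V \<and> y \<in> V)
     \<and> (\<forall>x y. E x y \<longrightarrow> E y x) \<and> (\<forall>x. \<not> E x x)"

definition srg :: "'a set \<Rightarrow> ('a \<Rightarrow> 'a \<Rightarrow> bool) \<Rightarrow> nat \<Rightarrow> nat \<Rightarrow> nat \<Rightarrow> nat \<Rightarrow> bool" where
  "srg V E n k l m \<longleftrightarrow> simple_graph V E \<and> card V = n
     \<and> (\<forall>x\<in>V. card {y\<in>V. E x y} = k)
     \<and> (\<forall>x\<in>V. \<forall>y\<in>V. E x y \<longrightarrow> card {z\<in>V. E x z \<and> E z y} = l)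
     \<and> (\<forall>x\<in>V. \<forall>y\<in>V. x \<noteq> y \<and> \<not> E x y \<longrightarrow> card {z\<in>V. E x z \<and> E z y} = m)"

definition walk :: "'a set \<Rightarrow> ('a \<Rightarrow> 'a \<Rightarrow> bool) \<Rightarrow> nat \<Rightarrow> 'a \<Rightarrow> 'a \<Rightarrow> bool" where
  "walk V E n x y \<longleftrightarrow> (\<exists>p. length p = Suc n \<and> p ! 0 = x \<and> p ! n = y \<and> set p \<subseteq> V
       \<and> (\<forall>i<n. E (p ! i) (p ! Suc i)))"

text \<open>Graph distance: length of a shortest walk (meaningful for connected graphs).\<close>
definition gdist :: "'a set \<Rightarrow> ('a \<Rightarrow> 'a \<Rightarrow> bool) \<Rightarrow> 'a \<Rightarrow> 'a \<Rightarrow> nat" where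
  "gdist V E x y = (LEAST n. walk V E n x y)"

definition connected_graph :: "'a set \<Rightarrow> ('a \<Rightarrow> 'a \<Rightarrow> bool) \<Rightarrow> bool" where
  "connected_graph V E \<longleftrightarrow> (\<forall>x\<in>V. \<forall>y\<in>V. \<exists>n. walk V E n x y)"

text \<open>Quadratic embedding constant: maximum of <f, D f> over f on V with
<f,f> = 1 and <1,f> = 0 (written as a supremum; the maximum is attained).\<close>
definition QEC :: "'a set \<Rightarrow> ('a \<Rightarrow> 'a \<Rightarrow> bool) \<Rightarrow> real" where
  "QEC V E = Sup {(\<Sum>x\<in>V. \<Sum>y\<in>V. real (gdist V E x y) * f x * f y) | f :: 'a \<Rightarrow> real.
        (\<Sum>x\<in>V. (f x)\<^sup>2) = 1 \<and> (\<Sum>x\<in>V. f x) = 0}"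

definition is_C5 :: "'a set \<Rightarrow> ('a \<Rightarrow> 'a \<Rightarrow> bool) \<Rightarrow> bool" where
  "is_C5 V E \<longleftrightarrow> (\<exists>\<phi> :: 'a \<Rightarrow> int. bij_betw \<phi> V {0..4}
      \<and> (\<forall>x\<in>V. \<forall>y\<in>V. E x y \<longleftrightarrow> (\<phi> x - \<phi> y) mod 5 \<in> {1, 4}))"

end

(*
  In a connected srg that is not complete all distances are 0, 1 or 2, so D = 2(J - I) - A and,
  for f orthogonal to the constants, <f, D f> = -2 <f, f> - <f, A f>.  On that subspace A satisfies
  (A - rho)(A - sigma) = 0, where rho > sigma are the roots of x^2 - (l - m) x - (k - m);
  hence QEC = -2 - sigma, and QEC < 0 exactly when sigma > -2.

  If the discriminant Delta = (l - m)^2 + 4 (k - m) is a perfect square, sigma is an integer and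
  an elementary estimate gives sigma <= -2.  Otherwise X = 2A - (l - m) I - c J, with c chosen so
  that X kills the constants, satisfies X^3 = Delta X, so its trace lies in Z sqrt Delta and is an
  integer, hence vanishes.  This is the conference-graph condition; together with sigma > -2 and
  k (k - l - 1) = m (n - k - 1) it leaves only srg(5, 2, 0, 1), which is the 5-cycle.
*)
theory Submission
  imports Defs Jordan_Normal_Form.Schur_Decomposition
begin

definition mat_trace :: "'a::comm_ring_1 mat \<Rightarrow> 'a" where
  "mat_trace A = (\<Sum>i<dim_row A. A $$ (i, i))"

lemma mat_trace_mult_comm:
  assumes "A \<in> carrier_mat n n" "B \<in> carrier_mat n n"
  shows "mat_trace (A * B) = mat_trace (B * A)"
proof -
  have "mat_trace (A * B) = (\<Sum>i<n. \<Sum>j<n. A $$ (i, j) * B $$ (j, i))"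
    using assms unfolding mat_trace_def by (simp add: scalar_prod_def lessThan_atLeast0)
  also have "\<dots> = (\<Sum>j<n. \<Sum>i<n. B $$ (j, i) * A $$ (i, j))"
    by (subst sum.swap) (simp add: mult.commute)
  also have "\<dots> = mat_trace (B * A)"
    using assms unfolding mat_trace_def by (simp add: scalar_prod_def lessThan_atLeast0)
  finally show ?thesis .
qed

lemma mat_trace_similar:
  assumes "similar_mat_wit A B P Q"
  shows "mat_trace A = mat_trace B"
proof -
  from assms obtain n where carrier: "A \<in> carrier_mat n n" "B \<in> carrier_mat n n"
    "P \<in> carrier_mat n n" "Q \<in> carrier_mat n n"
    and QP: "Q * P = 1\<^sub>m n" and A: "A = P * B * Q"
    unfolding similar_mat_wit_def Let_def by auto
  have "mat_trace A = mat_trace (Q * (P * B))"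
    unfolding A using carrier by (intro mat_trace_mult_comm) auto
  also have "Q * (P * B) = B" using QP carrier by (simp flip: assoc_mult_mat)
  finally show ?thesis .
qed

lemma mat_trace_eq_sum_eigenvalues:
  fixes M :: "complex mat"
  assumes M: "M \<in> carrier_mat n n"
  obtains es where "mat_trace M = sum_list es" "\<And>e. e \<in> set es \<Longrightarrow> eigenvalue M e"
proof -
  obtain es where char_poly: "char_poly M = (\<Prod>a\<leftarrow>es. [:- a, 1:])" and "length es = n"
    using char_poly_factorized[OF M] by auto
  obtain B P Q where "schur_decomposition M es = (B, P, Q)"
    by (cases "schur_decomposition M es") auto
  from schur_decomposition[OF M char_poly this]
  have sim: "similar_mat_wit M B P Q" and diag: "diag_mat B = es" by auto
  have B: "B \<in> carrier_mat n n" using similar_mat_witD2[OF M sim] by auto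
  have "mat_trace M = mat_trace B" by (rule mat_trace_similar[OF sim])
  also have "\<dots> = sum_list es"
    unfolding diag[symmetric] diag_mat_def mat_trace_def using B
    by (simp add: sum_list_distinct_conv_sum_set lessThan_atLeast0 atLeast_upt)
  finally have "mat_trace M = sum_list es" .
  moreover have "eigenvalue M e" if "e \<in> set es" for e
    using that eigenvalue_root_char_poly[OF M]
    by (simp add: char_poly poly_prod_list prod_list_zero_iff)
  ultimately show ?thesis by (rule that)
qed

lemma eigenvalue_of_cubic_relation:
  fixes M :: "'a::field mat"
  assumes M: "M \<in> carrier_mat n n" and cube: "M * M * M = c \<cdot>\<^sub>m M" and "eigenvalue M e"
  shows "e ^ 3 = c * e"
proof -
  obtain v where "eigenvector M v e" using assms(3) unfolding eigenvalue_def by auto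
  then have v: "v \<in> carrier_vec n" "v \<noteq> 0\<^sub>v n" and Mv: "M *\<^sub>v v = e \<cdot>\<^sub>v v"
    using M unfolding eigenvector_def by auto
  have "(M * M * M) *\<^sub>v v = M *\<^sub>v (M *\<^sub>v (M *\<^sub>v v))"
    using M v by (simp add: assoc_mult_mat_vec[of _ n n _ n])
  also have "\<dots> = (e ^ 3) \<cdot>\<^sub>v v"
    using M v Mv by (simp add: mult_mat_vec power3_eq_cube smult_smult_assoc)
  finally have cube_v: "(c \<cdot>\<^sub>m M) *\<^sub>v v = (e ^ 3) \<cdot>\<^sub>v v" unfolding cube .
  obtain i where i: "i < n" "v $ i \<noteq> 0"
    using v by (metis eq_vecI carrier_vecD index_zero_vec)
  have "((c \<cdot>\<^sub>m M) *\<^sub>v v) $ i = c * ((M *\<^sub>v v) $ i)"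
    using M v i by (simp add: scalar_prod_def sum_distrib_left mult.assoc)
  then have "e ^ 3 * v $ i = c * e * v $ i"
    using arg_cong[OF cube_v, of "\<lambda>w. w $ i"] i v M Mv by simp
  then show ?thesis using i by simp
qed

lemma sum_list_in_Ints_times_sqrt:
  fixes es :: "complex list" and d :: real
  assumes "\<And>e. e \<in> set es \<Longrightarrow> e ^ 3 = of_real d * e" and "d > 0"
  shows "\<exists>z::int. sum_list es = of_int z * of_real (sqrt d)"
  using assms(1)
proof (induction es)
  case Nil
  show ?case by (intro exI[of _ 0]) simp
next
  case (Cons e es)
  then obtain z where z: "sum_list es = of_int z * of_real (sqrt d)" by auto
  define q :: complex where "q = of_real (sqrt d)"
  have "q * q = of_real d" unfolding q_def using assms(2) by (simp flip: of_real_mult)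
  then have "e * (e - q) * (e + q) = e ^ 3 - of_real d * e"
    by (simp add: algebra_simps power3_eq_cube)
  then have "e = 0 \<or> e = q \<or> e = - q"
    using Cons.prems[of e] by (simp add: eq_neg_iff_add_eq_0)
  then show ?case
  proof (elim disjE)
    assume "e = 0"
    then show ?thesis using z by (intro exI[of _ z]) simp
  next
    assume "e = q"
    then show ?thesis using z unfolding q_def by (intro exI[of _ "z + 1"]) (simp add: algebra_simps)
  next
    assume "e = - q"
    then show ?thesis using z unfolding q_def by (intro exI[of _ "z - 1"]) (simp add: algebra_simps)
  qed
qed

lemma mat_trace_cubic_relation:
  fixes M :: "complex mat" and d :: real
  assumes "M \<in> carrier_mat n n" "M * M * M = of_real d \<cdot>\<^sub>m M" "d > 0"
  shows "\<exists>z::int. mat_trace M = of_int z * of_real (sqrt d)"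
proof -
  obtain es where es: "mat_trace M = sum_list es" "\<And>e. e \<in> set es \<Longrightarrow> eigenvalue M e"
    using mat_trace_eq_sum_eigenvalues[OF assms(1)] by blast
  have "e ^ 3 = of_real d * e" if "e \<in> set es" for e
    using eigenvalue_of_cubic_relation[OF assms(1,2) es(2)[OF that]] .
  then show ?thesis using sum_list_in_Ints_times_sqrt[OF _ assms(3)] es(1) by simp
qed

definition kernel_mat :: "(nat \<Rightarrow> 'a) \<Rightarrow> nat \<Rightarrow> ('a \<Rightarrow> 'a \<Rightarrow> real) \<Rightarrow> complex mat" where
  "kernel_mat h n F = mat n n (\<lambda>(i, j). complex_of_real (F (h i) (h j)))"

lemma kernel_mat_mult:
  assumes "bij_betw h {0..<n} V"
  shows "kernel_mat h n F * kernel_mat h n G = kernel_mat h n (\<lambda>x y. \<Sum>z\<in>V. F x z * G z y)"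
proof (rule eq_matI)
  fix i j assume "i < dim_row (kernel_mat h n (\<lambda>x y. \<Sum>z\<in>V. F x z * G z y))"
    "j < dim_col (kernel_mat h n (\<lambda>x y. \<Sum>z\<in>V. F x z * G z y))"
  then have "i < n" "j < n" unfolding kernel_mat_def by auto
  then have "(kernel_mat h n F * kernel_mat h n G) $$ (i, j)
      = complex_of_real (\<Sum>l\<in>{0..<n}. F (h i) (h l) * G (h l) (h j))"
    unfolding kernel_mat_def by (simp add: scalar_prod_def)
  also have "\<dots> = complex_of_real (\<Sum>z\<in>V. F (h i) z * G z (h j))"
    using sum.reindex_bij_betw[OF assms, of "\<lambda>z. F (h i) z * G z (h j)"] by simp
  finally show "(kernel_mat h n F * kernel_mat h n G) $$ (i, j)
      = kernel_mat h n (\<lambda>x y. \<Sum>z\<in>V. F x z * G z y) $$ (i, j)"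
    using \<open>i < n\<close> \<open>j < n\<close> unfolding kernel_mat_def by simp
qed (auto simp: kernel_mat_def)

lemma kernel_trace_cubic_relation:
  fixes F :: "'a \<Rightarrow> 'a \<Rightarrow> real"
  assumes "finite V" "d > 0"
    and cube: "\<And>x y. x \<in> V \<Longrightarrow> y \<in> V \<Longrightarrow> (\<Sum>z\<in>V. (\<Sum>w\<in>V. F x w * F w z) * F z y) = d * F x y"
  shows "\<exists>z::int. (\<Sum>x\<in>V. F x x) = of_int z * sqrt d"
proof -
  obtain h where h: "bij_betw h {0..<card V} V"
    using ex_bij_betw_nat_finite[OF assms(1)] by auto
  define M where "M = kernel_mat h (card V) F"
  have hV: "h i \<in> V" if "i < card V" for i using h that unfolding bij_betw_def by auto
  have "M * M * M = kernel_mat h (card V) (\<lambda>x y. \<Sum>z\<in>V. (\<Sum>w\<in>V. F x w * F w z) * F z y)"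
    unfolding M_def kernel_mat_mult[OF h] ..
  also have "\<dots> = of_real d \<cdot>\<^sub>m M"
    unfolding M_def kernel_mat_def by (rule eq_matI) (auto simp: cube hV simp del: of_real_sum)
  finally obtain z where "mat_trace M = of_int z * of_real (sqrt d)"
    using mat_trace_cubic_relation[of M "card V"] \<open>d > 0\<close> unfolding M_def kernel_mat_def by auto
  moreover have "mat_trace M = complex_of_real (\<Sum>x\<in>V. F x x)"
    unfolding M_def kernel_mat_def mat_trace_def
    using sum.reindex_bij_betw[OF h, of "\<lambda>x. F x x"] by (simp add: lessThan_atLeast0 flip: of_real_sum)
  ultimately have "complex_of_real (\<Sum>x\<in>V. F x x) = complex_of_real (of_int z * sqrt d)" by simp
  then show ?thesis by (simp only: of_real_eq_iff) blast
qed

lemma sqrt_in_Ints_if_rational_multiple: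
  fixes t z :: int and D :: real
  assumes "D \<in> \<int>" "D \<ge> 0" "z \<noteq> 0" "of_int t = of_int z * sqrt D"
  shows "sqrt D \<in> \<int>"
proof -
  obtain D' where D: "D = of_int D'" using assms(1) by (auto elim: Ints_cases)
  have "real_of_int (t\<^sup>2) = of_int (z\<^sup>2 * D')"
    using assms(2,4) unfolding D by (simp add: power_mult_distrib)
  then have "z\<^sup>2 dvd t\<^sup>2" by (simp only: of_int_eq_iff) simp
  then have "z dvd t" by simp
  then obtain w where "t = z * w" by blast
  then have "sqrt D = of_int w" using assms(3,4) by simp
  then show ?thesis by simp
qed

lemma card_filter_bij_betw:
  assumes "bij_betw \<phi> V A"
  shows "card {y\<in>V. P (\<phi> y)} = card {j\<in>A. P j}"
proof -
  have "bij_betw \<phi> {y\<in>V. P (\<phi> y)} {j\<in>A. P j}"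
    using assms unfolding bij_betw_def inj_on_def by auto
  then show ?thesis by (rule bij_betw_same_card)
qed

lemma walk_0_iff: "walk V E 0 x y \<longleftrightarrow> x = y \<and> x \<in> V"
proof
  assume "walk V E 0 x y"
  then obtain p where p: "length p = 1" "p ! 0 = x" "p ! 0 = y" "set p \<subseteq> V"
    unfolding walk_def by auto
  have "p ! 0 \<in> set p" using p(1) by simp
  then show "x = y \<and> x \<in> V" using p by blast
next
  assume "x = y \<and> x \<in> V"
  then show "walk V E 0 x y" unfolding walk_def by (intro exI[of _ "[x]"]) auto
qed

lemma walk_1_iff: "walk V E 1 x y \<longleftrightarrow> E x y \<and> x \<in> V \<and> y \<in> V"
proof
  assume "walk V E 1 x y"
  then obtain p where p: "length p = Suc 1" "p ! 0 = x" "p ! 1 = y" "set p \<subseteq> V"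
    "\<forall>i<1. E (p ! i) (p ! Suc i)"
    unfolding walk_def by blast
  have "p ! 0 \<in> set p" "p ! 1 \<in> set p" using p(1) by simp_all
  then show "E x y \<and> x \<in> V \<and> y \<in> V" using p by auto
next
  assume "E x y \<and> x \<in> V \<and> y \<in> V"
  then show "walk V E 1 x y" unfolding walk_def by (intro exI[of _ "[x, y]"]) simp
qed

lemma walk_2I: "E x z \<Longrightarrow> E z y \<Longrightarrow> {x, y, z} \<subseteq> V \<Longrightarrow> walk V E 2 x y"
  unfolding walk_def by (intro exI[of _ "[x, z, y]"]) (simp add: less_2_cases_iff)

locale connected_srg =
  fixes V :: "'a set" and E :: "'a \<Rightarrow> 'a \<Rightarrow> bool" and n k l m :: nat
  assumes srg: "srg V E n k l m"
    and mu_pos: "m \<ge> 1"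
    and not_complete: "\<exists>x\<in>V. \<exists>y\<in>V. x \<noteq> y \<and> \<not> E x y"
begin

lemma finite_V: "finite V"
  and E_in_V: "E x y \<Longrightarrow> x \<in> V \<and> y \<in> V"
  and E_sym: "E x y \<longleftrightarrow> E y x"
  and E_irrefl: "\<not> E x x"
  and card_V: "card V = n"
  and card_neighbours: "x \<in> V \<Longrightarrow> card {y\<in>V. E x y} = k"
  and card_common_neighbours_adj:
    "x \<in> V \<Longrightarrow> y \<in> V \<Longrightarrow> E x y \<Longrightarrow> card {z\<in>V. E x z \<and> E z y} = l"
  and card_common_neighbours_nonadj:
    "x \<in> V \<Longrightarrow> y \<in> V \<Longrightarrow> x \<noteq> y \<Longrightarrow> \<not> E x y \<Longrightarrow> card {z\<in>V. E x z \<and> E z y} = m"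
  using srg unfolding srg_def simple_graph_def by blast+

lemma common_neighbour:
  assumes "x \<in> V" "y \<in> V" "x \<noteq> y" "\<not> E x y"
  obtains z where "z \<in> V" "E x z" "E z y"
proof -
  have "{z\<in>V. E x z \<and> E z y} \<noteq> {}"
    using card_common_neighbours_nonadj[OF assms] mu_pos by (metis card.empty not_one_le_zero)
  then show ?thesis using that by blast
qed

lemma non_edge_path:
  obtains x y z where "x \<in> V" "y \<in> V" "z \<in> V" "x \<noteq> y" "\<not> E x y" "E x z" "E z y"
proof -
  obtain x y where xy: "x \<in> V" "y \<in> V" "x \<noteq> y" "\<not> E x y" using not_complete by blast
  obtain z where "z \<in> V" "E x z" "E z y" using common_neighbour[OF xy] .
  with xy show ?thesis using that by blast
qed

lemma ex_edge:
  obtains x y where "x \<in> V" "y \<in> V" "E x y"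
proof -
  obtain x y z where "x \<in> V" "z \<in> V" "E x z" by (rule non_edge_path)
  then show ?thesis using that by blast
qed

lemma m_le_k: "m \<le> k"
proof -
  obtain x y where xyz: "x \<in> V" "y \<in> V" "x \<noteq> y" "\<not> E x y" using not_complete by blast
  have "card {z\<in>V. E x z \<and> E z y} \<le> card {z\<in>V. E x z}"
    using finite_V by (intro card_mono) auto
  then show ?thesis using card_common_neighbours_nonadj[OF xyz] card_neighbours[OF xyz(1)] by simp
qed

lemma l_plus_2_le_k: "l + 2 \<le> k"
proof -
  obtain x y z where xyz: "x \<in> V" "y \<in> V" "z \<in> V" "x \<noteq> y" "\<not> E x y" "E x z" "E z y"
    by (rule non_edge_path)
  have "{z'\<in>V. E z z' \<and> E z' x} \<subseteq> {z'\<in>V. E z z'} - {x, y}"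
    using xyz E_irrefl E_sym by auto
  then have "card {z'\<in>V. E z z' \<and> E z' x} \<le> card ({z'\<in>V. E z z'} - {x, y})"
    using finite_V by (intro card_mono) auto
  also have "\<dots> = k - 2"
    using xyz E_sym card_neighbours[OF xyz(3)] by (subst card_Diff_subset) auto
  finally have "l \<le> k - 2"
    using card_common_neighbours_adj[OF xyz(3,1)] xyz E_sym by simp
  moreover have "card {x, y} \<le> card {z'\<in>V. E z z'}"
    using xyz E_sym finite_V by (intro card_mono) auto
  ultimately show ?thesis using xyz card_neighbours[OF xyz(3)] by simp
qed

lemma k_plus_2_le_n: "k + 2 \<le> n"
proof -
  obtain x y where xy: "x \<in> V" "y \<in> V" "x \<noteq> y" "\<not> E x y" using not_complete by blast
  have "card {z\<in>V. E x z} \<le> card (V - {x, y})"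
    using finite_V xy E_irrefl by (intro card_mono) auto
  also have "\<dots> = n - 2" using xy card_V by (subst card_Diff_subset) auto
  finally have "k \<le> n - 2" using card_neighbours[OF xy(1)] by simp
  moreover have "card {x, y} \<le> n" using xy finite_V card_V by (metis card_mono empty_subsetI insert_subset)
  ultimately show ?thesis using xy by simp
qed

definition adj :: "'a \<Rightarrow> 'a \<Rightarrow> real" where
  "adj x y = (if E x y then 1 else 0)"

definition adj_op :: "('a \<Rightarrow> real) \<Rightarrow> 'a \<Rightarrow> real" where
  "adj_op f x = (\<Sum>y\<in>V. adj x y * f y)"

lemma adj_sym: "adj x y = adj y x"
  unfolding adj_def using E_sym by simp

lemma adj_self [simp]: "adj x x = 0"
  unfolding adj_def using E_irrefl by simp

lemma sum_indicator_V: "x \<in> V \<Longrightarrow> (\<Sum>y\<in>V. (if x = y then 1 else 0) * f y) = (f x :: real)"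
  using finite_V by (simp add: if_distrib[of "\<lambda>c. c * f _"] cong: if_cong)

lemma row_sum_adj: "x \<in> V \<Longrightarrow> (\<Sum>y\<in>V. adj x y) = real k"
  using card_neighbours finite_V unfolding adj_def by (simp add: sum.If_cases Int_def)

lemma adj_square:
  assumes "x \<in> V" "y \<in> V"
  shows "(\<Sum>z\<in>V. adj x z * adj z y)
    = real m + (real k - real m) * (if x = y then 1 else 0) + (real l - real m) * adj x y"
proof -
  have "(\<Sum>z\<in>V. adj x z * adj z y) = (\<Sum>z\<in>V. if E x z \<and> E z y then 1 else 0)"
    unfolding adj_def by (intro sum.cong refl) simp
  also have "\<dots> = real (card {z\<in>V. E x z \<and> E z y})"
    using finite_V by (simp add: sum.If_cases Int_def)
  also have "\<dots> = real m + (real k - real m) * (if x = y then 1 else 0) + (real l - real m) * adj x y"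
  proof (cases "x = y")
    case True
    moreover have "{z\<in>V. E x z \<and> E z x} = {z\<in>V. E x z}" using E_sym by blast
    ultimately show ?thesis using card_neighbours[OF assms(1)] by simp
  next
    case False
    then show ?thesis
      using card_common_neighbours_adj[OF assms] card_common_neighbours_nonadj[OF assms]
      by (cases "E x y") (simp_all add: adj_def)
  qed
  finally show ?thesis .
qed

lemma adj_op_cong: "(\<And>y. y \<in> V \<Longrightarrow> f y = g y) \<Longrightarrow> adj_op f x = adj_op g x"
  unfolding adj_op_def by (intro sum.cong refl) simp

lemma adj_op_linear: "adj_op (\<lambda>y. a * f y - b * g y) x = a * adj_op f x - b * adj_op g x"
  unfolding adj_op_def by (simp add: sum_subtractf sum_distrib_left algebra_simps)

lemma adj_op_self_adjoint: "(\<Sum>x\<in>V. g x * adj_op f x) = (\<Sum>x\<in>V. f x * adj_op g x)"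
proof -
  have "g x * (adj x y * f y) = f y * (adj y x * g x)" for x y
    by (simp add: adj_sym[of x y] ac_simps)
  then show ?thesis
    unfolding adj_op_def sum_distrib_left by (subst sum.swap) (intro sum.cong refl)
qed

lemma sum_adj_op: "(\<Sum>x\<in>V. adj_op f x) = real k * (\<Sum>x\<in>V. f x)"
proof -
  have "(\<Sum>x\<in>V. adj_op f x) = (\<Sum>x\<in>V. f x * adj_op (\<lambda>_. 1) x)"
    using adj_op_self_adjoint[of "\<lambda>_. 1" f] by simp
  also have "\<dots> = (\<Sum>x\<in>V. f x * real k)"
    by (intro sum.cong refl) (simp add: adj_op_def row_sum_adj)
  finally show ?thesis by (simp add: sum_distrib_left mult.commute)
qed

lemma adj_op_adj_op:
  assumes "x \<in> V"
  shows "adj_op (adj_op f) x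
    = real m * (\<Sum>y\<in>V. f y) + (real k - real m) * f x + (real l - real m) * adj_op f x"
proof -
  have "adj_op (adj_op f) x = (\<Sum>y\<in>V. \<Sum>z\<in>V. adj x y * adj y z * f z)"
    unfolding adj_op_def by (simp add: sum_distrib_left mult.assoc)
  also have "\<dots> = (\<Sum>z\<in>V. (\<Sum>y\<in>V. adj x y * adj y z) * f z)"
    by (subst sum.swap) (simp add: sum_distrib_right)
  also have "\<dots> = (\<Sum>z\<in>V. real m * f z + (real k - real m) * ((if x = z then 1 else 0) * f z)
      + (real l - real m) * (adj x z * f z))"
  proof (intro sum.cong refl)
    fix z assume "z \<in> V"
    show "(\<Sum>y\<in>V. adj x y * adj y z) * f z = real m * f z
      + (real k - real m) * ((if x = z then 1 else 0) * f z) + (real l - real m) * (adj x z * f z)"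
      unfolding adj_square[OF assms \<open>z \<in> V\<close>] by (simp add: algebra_simps)
  qed
  also have "\<dots> = real m * (\<Sum>y\<in>V. f y) + (real k - real m) * f x + (real l - real m) * adj_op f x"
    unfolding adj_op_def using assms by (simp add: sum.distrib sum_indicator_V flip: sum_distrib_left)
  finally show ?thesis .
qed

lemma srg_parameter_identity: "int k * (int k - int l - 1) = int m * (int n - int k - 1)"
proof -
  obtain x where x: "x \<in> V" using not_complete by blast
  have degree: "adj_op (\<lambda>_. 1) y = real k" if "y \<in> V" for y
    using that by (simp add: adj_op_def row_sum_adj)
  have "real k * real k = adj_op (adj_op (\<lambda>_. 1)) x"
    using x unfolding adj_op_def[of "adj_op _"]
    by (simp add: degree row_sum_adj flip: sum_distrib_right)
  also have "\<dots> = real m * real n + real k - real m + (real l - real m) * real k"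
    using x card_V by (simp add: adj_op_adj_op degree)
  finally have "real_of_int (int k * (int k - int l - 1)) = of_int (int m * (int n - int k - 1))"
    by (simp add: algebra_simps)
  then show ?thesis by (simp only: of_int_eq_iff)
qed

lemma gdist_eq:
  assumes "x \<in> V" "y \<in> V"
  shows "real (gdist V E x y) = 2 - 2 * (if x = y then 1 else 0) - adj x y"
proof -
  have "gdist V E x y = (if x = y then 0 else if E x y then 1 else 2)"
    unfolding gdist_def
  proof (rule Least_equality)
    show "walk V E (if x = y then 0 else if E x y then 1 else 2) x y"
    proof (cases "x = y \<or> E x y")
      case True
      then show ?thesis using assms walk_0_iff[of V E x y] walk_1_iff[of V E x y] by auto
    next
      case False
      then obtain z where "z \<in> V" "E x z" "E z y" using common_neighbour[OF assms] by blast
      then show ?thesis using False assms by (simp add: walk_2I)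
    qed
    fix d assume "walk V E d x y"
    then show "(if x = y then 0 else if E x y then 1 else 2) \<le> d"
      by (cases d; cases "d = 1") (auto simp: walk_0_iff walk_1_iff[unfolded One_nat_def])
  qed
  then show ?thesis by (simp add: adj_def E_irrefl)
qed

text \<open>\<open>\<rho>\<close> and \<open>\<sigma>\<close> are the eigenvalues of the adjacency matrix other than \<open>k\<close>,
  the roots of \<open>x\<^sup>2 - \<beta> x - (k - m)\<close>.\<close>
definition \<beta> :: real where "\<beta> = real l - real m"
definition \<Delta> :: real where "\<Delta> = \<beta>\<^sup>2 + 4 * (real k - real m)"
definition \<rho> :: real where "\<rho> = (\<beta> + sqrt \<Delta>) / 2"
definition \<sigma> :: real where "\<sigma> = (\<beta> - sqrt \<Delta>) / 2"

lemma \<Delta>_pos: "\<Delta> > 0"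
proof (cases "k = m")
  case True
  then show ?thesis using l_plus_2_le_k unfolding \<Delta>_def \<beta>_def by simp
next
  case False
  then show ?thesis using m_le_k unfolding \<Delta>_def by (simp add: add_nonneg_pos)
qed

lemma abs_\<beta>_le: "\<bar>\<beta>\<bar> \<le> sqrt \<Delta>"
  using m_le_k unfolding \<Delta>_def by (simp add: real_le_rsqrt)

lemma \<rho>_nonneg: "\<rho> \<ge> 0"
  using abs_\<beta>_le unfolding \<rho>_def by simp

lemma \<rho>_plus_\<sigma>: "\<rho> + \<sigma> = \<beta>"
  unfolding \<rho>_def \<sigma>_def by (simp add: field_simps)

lemma \<rho>_minus_\<sigma>: "\<rho> - \<sigma> = sqrt \<Delta>"
  unfolding \<rho>_def \<sigma>_def by (simp add: field_simps)

lemma \<rho>_times_\<sigma>: "\<rho> * \<sigma> = real m - real k"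
proof -
  have "\<rho> * \<sigma> = (\<beta>\<^sup>2 - (sqrt \<Delta>)\<^sup>2) / 4"
    unfolding \<rho>_def \<sigma>_def by (simp add: field_simps power2_eq_square)
  then show ?thesis using \<Delta>_pos unfolding \<Delta>_def by simp
qed

definition adj_form :: "('a \<Rightarrow> real) \<Rightarrow> real" where
  "adj_form f = (\<Sum>x\<in>V. f x * adj_op f x)"

definition dist_form :: "('a \<Rightarrow> real) \<Rightarrow> real" where
  "dist_form f = (\<Sum>x\<in>V. \<Sum>y\<in>V. real (gdist V E x y) * f x * f y)"

lemma sum_sq_adj_op:
  assumes "(\<Sum>x\<in>V. f x) = 0"
  shows "(\<Sum>x\<in>V. (adj_op f x)\<^sup>2) = (real k - real m) * (\<Sum>x\<in>V. (f x)\<^sup>2) + \<beta> * adj_form f"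
proof -
  have "(\<Sum>x\<in>V. (adj_op f x)\<^sup>2) = (\<Sum>y\<in>V. f y * adj_op (adj_op f) y)"
    unfolding power2_eq_square by (rule adj_op_self_adjoint)
  also have "\<dots> = (\<Sum>y\<in>V. (real k - real m) * (f y)\<^sup>2 + \<beta> * (f y * adj_op f y))"
    unfolding \<beta>_def using assms
    by (intro sum.cong refl) (simp add: adj_op_adj_op algebra_simps power2_eq_square)
  finally show ?thesis
    unfolding adj_form_def by (simp add: sum.distrib sum_distrib_left)
qed

text \<open>On functions orthogonal to the constants, \<open>adj_op\<close> satisfies
  \<open>(A - \<rho>)(A - \<sigma>) = 0\<close>, so \<open>\<Sum>(A f - \<sigma> f)\<^sup>2 = (\<rho> - \<sigma>)(\<langle>f, A f\<rangle> - \<sigma> \<langle>f, f\<rangle>)\<close>.\<close>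
lemma adj_form_ge:
  assumes "(\<Sum>x\<in>V. f x) = 0"
  shows "\<sigma> * (\<Sum>x\<in>V. (f x)\<^sup>2) \<le> adj_form f"
proof -
  let ?S = "\<Sum>x\<in>V. (f x)\<^sup>2"
  have "0 \<le> (\<Sum>x\<in>V. (adj_op f x - \<sigma> * f x)\<^sup>2)" by (simp add: sum_nonneg)
  also have "\<dots> = (\<Sum>x\<in>V. (adj_op f x)\<^sup>2) - 2 * \<sigma> * adj_form f + \<sigma>\<^sup>2 * ?S"
    unfolding adj_form_def power2_diff
    by (simp add: sum.distrib sum_subtractf sum_distrib_left power_mult_distrib mult_ac)
  also have "\<dots> = (\<rho> - \<sigma>) * (adj_form f - \<sigma> * ?S)"
  proof -
    have "real k - real m = - (\<rho> * \<sigma>)" "\<beta> = \<rho> + \<sigma>" using \<rho>_times_\<sigma> \<rho>_plus_\<sigma> by auto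
    then show ?thesis
      unfolding sum_sq_adj_op[OF assms] by (simp only:) (simp add: algebra_simps power2_eq_square)
  qed
  finally have "0 \<le> (\<rho> - \<sigma>) * (adj_form f - \<sigma> * ?S)" .
  moreover have "\<rho> - \<sigma> > 0" using \<rho>_minus_\<sigma> \<Delta>_pos by simp
  ultimately show ?thesis by (simp add: zero_le_mult_iff)
qed

lemma dist_form_eq:
  assumes "(\<Sum>x\<in>V. f x) = 0"
  shows "dist_form f = - 2 * (\<Sum>x\<in>V. (f x)\<^sup>2) - adj_form f"
proof -
  have "dist_form f = (\<Sum>x\<in>V. \<Sum>y\<in>V.
      2 * f x * f y - 2 * f x * ((if x = y then 1 else 0) * f y) - f x * (adj x y * f y))"
    unfolding dist_form_def by (intro sum.cong refl) (simp add: gdist_eq algebra_simps)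
  also have "\<dots> = (\<Sum>x\<in>V. 2 * f x * (\<Sum>y\<in>V. f y)
      - 2 * f x * (\<Sum>y\<in>V. (if x = y then 1 else 0) * f y) - f x * adj_op f x)"
    unfolding adj_op_def by (simp add: sum_subtractf sum_distrib_left)
  also have "\<dots> = (\<Sum>x\<in>V. 2 * f x * (\<Sum>y\<in>V. f y) - 2 * (f x)\<^sup>2 - f x * adj_op f x)"
    by (intro sum.cong refl) (simp add: sum_indicator_V power2_eq_square)
  also have "\<dots> = - 2 * (\<Sum>x\<in>V. (f x)\<^sup>2) - adj_form f"
    unfolding adj_form_def using assms by (simp add: sum_subtractf sum_distrib_left)
  finally show ?thesis .
qed

lemma dist_form_scale: "dist_form (\<lambda>x. c * f x) = c\<^sup>2 * dist_form f"
  unfolding dist_form_def sum_distrib_left by (intro sum.cong refl) (simp add: power2_eq_square mult_ac)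

text \<open>For an edge \<open>xy\<close>, \<open>e = \<delta>\<^sub>x - \<delta>\<^sub>y\<close> is orthogonal to the constants, so
  \<open>(A - \<sigma>)(A - \<rho>) e = 0\<close>: the witness is \<open>(A - \<rho>) e\<close>, whose value at \<open>x\<close> is \<open>-1 - \<rho> \<noteq> 0\<close>.\<close>
lemma \<sigma>_eigenfunction:
  obtains g where "(\<Sum>x\<in>V. g x) = 0" "\<And>x. x \<in> V \<Longrightarrow> adj_op g x = \<sigma> * g x"
    "(\<Sum>x\<in>V. (g x)\<^sup>2) > 0"
proof -
  obtain x y where xy: "x \<in> V" "y \<in> V" "E x y" by (rule ex_edge)
  define e where "e v = (if x = v then 1 else 0) - (if y = v then 1 else (0::real))" for v
  define g where "g v = adj_op e v - \<rho> * e v" for v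
  have sum_e: "(\<Sum>v\<in>V. e v) = 0"
    unfolding e_def using xy finite_V by (simp add: sum_subtractf)
  have "(\<Sum>v\<in>V. g v) = 0"
    unfolding g_def using sum_e by (simp add: sum_subtractf sum_adj_op flip: sum_distrib_left)
  moreover have "adj_op g v = \<sigma> * g v" if "v \<in> V" for v
  proof -
    have "adj_op g v = adj_op (adj_op e) v - \<rho> * adj_op e v"
      unfolding g_def adj_op_def[of "\<lambda>v. adj_op e v - \<rho> * e v"] adj_op_def[of e v]
        adj_op_def[of "adj_op e" v]
      by (simp add: algebra_simps sum_subtractf sum_distrib_left)
    also have "\<dots> = (real k - real m) * e v + (\<beta> - \<rho>) * adj_op e v"
      using adj_op_adj_op[OF that, of e] sum_e by (simp add: \<beta>_def algebra_simps)
    also have "\<dots> = \<sigma> * g v"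
    proof -
      have "real k - real m = - (\<rho> * \<sigma>)" "\<beta> - \<rho> = \<sigma>" using \<rho>_times_\<sigma> \<rho>_plus_\<sigma> by auto
      then show ?thesis unfolding g_def by (simp only:) (simp add: algebra_simps)
    qed
    finally show ?thesis .
  qed
  moreover have "(\<Sum>v\<in>V. (g v)\<^sup>2) > 0"
  proof -
    have "adj_op e x = (\<Sum>v\<in>V. (if x = v then 1 else 0) * adj x v)
        - (\<Sum>v\<in>V. (if y = v then 1 else 0) * adj x v)"
      unfolding adj_op_def e_def by (simp add: algebra_simps sum_subtractf)
    also have "\<dots> = - 1" using xy E_irrefl by (simp add: sum_indicator_V adj_def)
    finally have "adj_op e x = - 1" .
    moreover have "e x = 1" unfolding e_def using xy E_irrefl by auto
    ultimately have "g x = - 1 - \<rho>" unfolding g_def by simp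
    then have "(g x)\<^sup>2 > 0" using \<rho>_nonneg by simp
    also have "(g x)\<^sup>2 \<le> (\<Sum>v\<in>V. (g v)\<^sup>2)" using xy finite_V by (intro member_le_sum) auto
    finally show ?thesis .
  qed
  ultimately show ?thesis by (rule that)
qed

lemma QEC_eq: "QEC V E = - 2 - \<sigma>"
proof -
  have "QEC V E = Sup {dist_form f | f. (\<Sum>x\<in>V. (f x)\<^sup>2) = 1 \<and> (\<Sum>x\<in>V. f x) = 0}"
    unfolding QEC_def dist_form_def ..
  also have "\<dots> = - 2 - \<sigma>"
  proof (rule cSup_eq_maximum)
    obtain g where g: "(\<Sum>x\<in>V. g x) = 0" "\<And>x. x \<in> V \<Longrightarrow> adj_op g x = \<sigma> * g x"
      and "(\<Sum>x\<in>V. (g x)\<^sup>2) > 0" using \<sigma>_eigenfunction by blast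
    define S where "S = (\<Sum>x\<in>V. (g x)\<^sup>2)"
    have S: "S > 0" "(1 / sqrt S)\<^sup>2 = 1 / S"
      using \<open>(\<Sum>x\<in>V. (g x)\<^sup>2) > 0\<close> unfolding S_def by (simp_all add: power_divide)
    define f where "f x = 1 / sqrt S * g x" for x
    have "adj_form g = \<sigma> * S"
      unfolding adj_form_def S_def sum_distrib_left power2_eq_square
      by (intro sum.cong) (simp_all add: g(2))
    then have "dist_form g = (- 2 - \<sigma>) * S"
      using dist_form_eq[OF g(1)] unfolding S_def[symmetric] by (simp add: algebra_simps)
    then have "- 2 - \<sigma> = dist_form f"
      using dist_form_scale[of "1 / sqrt S" g] S unfolding f_def by simp
    moreover have "(\<Sum>x\<in>V. (f x)\<^sup>2) = 1"
      unfolding f_def power_mult_distrib S(2) sum_distrib_left[symmetric] S_def[symmetric]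
      using S(1) by simp
    moreover have "(\<Sum>x\<in>V. f x) = 0"
      unfolding f_def sum_distrib_left[symmetric] g(1) by simp
    ultimately show "- 2 - \<sigma> \<in> {dist_form f | f. (\<Sum>x\<in>V. (f x)\<^sup>2) = 1 \<and> (\<Sum>x\<in>V. f x) = 0}"
      by blast
  next
    fix q assume "q \<in> {dist_form f | f. (\<Sum>x\<in>V. (f x)\<^sup>2) = 1 \<and> (\<Sum>x\<in>V. f x) = 0}"
    then obtain f where "q = dist_form f" "(\<Sum>x\<in>V. (f x)\<^sup>2) = 1" "(\<Sum>x\<in>V. f x) = 0"
      by blast
    then show "q \<le> - 2 - \<sigma>" using dist_form_eq adj_form_ge[of f] by simp
  qed
  finally show ?thesis .
qed

lemma \<Delta>_in_Ints: "\<Delta> \<in> \<int>"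
  unfolding \<Delta>_def \<beta>_def by simp

lemma \<sigma>_le_if_sqrt_\<Delta>_in_Ints:
  assumes "sqrt \<Delta> \<in> \<int>"
  shows "\<sigma> \<le> - 2"
proof (rule ccontr)
  assume "\<not> \<sigma> \<le> - 2"
  obtain d where d: "sqrt \<Delta> = of_int d" using assms by (auto elim: Ints_cases)
  define b where "b = int l - int m"
  define t where "t = d - b"
  have "real_of_int t < 4" "real_of_int \<bar>b\<bar> \<le> of_int d"
    using \<open>\<not> \<sigma> \<le> - 2\<close> abs_\<beta>_le unfolding t_def b_def \<sigma>_def \<beta>_def by (auto simp: d)
  then have t: "t = 0 \<or> t = 1 \<or> t = 2 \<or> t = 3" and "\<bar>b\<bar> \<le> d" unfolding t_def by auto
  have "real_of_int (t * (2 * b + t)) = of_int (4 * (int k - int m))"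
  proof -
    have "(of_int d)\<^sup>2 = \<Delta>" using \<Delta>_pos by (simp flip: d)
    then show ?thesis unfolding t_def b_def \<Delta>_def \<beta>_def by (simp add: algebra_simps power2_eq_square)
  qed
  then have eq: "t * (2 * b + t) = 4 * (int k - int m)" by (simp only: of_int_eq_iff)
  from t show False
  proof (elim disjE)
    assume "t = 0"
    then show False using eq \<open>\<bar>b\<bar> \<le> d\<close> l_plus_2_le_k m_le_k unfolding t_def b_def by auto
  next
    assume "t = 1"
    then show False using eq by presburger
  next
    assume "t = 2"
    then show False using eq l_plus_2_le_k unfolding b_def by simp
  next
    assume "t = 3"
    then show False using eq by presburger
  qed
qed

definition \<gamma> :: real where "\<gamma> = (2 * real k - \<beta>) / real n"

lemma n_times_\<gamma>: "real n * \<gamma> = 2 * real k - \<beta>"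
  using k_plus_2_le_n unfolding \<gamma>_def by simp

text \<open>\<open>X = 2 A - \<beta> I - \<gamma> J\<close> annihilates the constants and equals \<open>2 A - \<beta>\<close> on their
  orthogonal complement, where its square is \<open>\<Delta>\<close>; hence \<open>X\<^sup>3 = \<Delta> X\<close>.\<close>
definition X :: "'a \<Rightarrow> 'a \<Rightarrow> real" where
  "X x y = 2 * adj x y - \<beta> * (if x = y then 1 else 0) - \<gamma>"

definition X_op :: "('a \<Rightarrow> real) \<Rightarrow> 'a \<Rightarrow> real" where
  "X_op f x = (\<Sum>y\<in>V. X x y * f y)"

lemma X_op_eq:
  assumes "x \<in> V"
  shows "X_op f x = 2 * adj_op f x - \<beta> * f x - \<gamma> * (\<Sum>y\<in>V. f y)"
proof -
  have "X_op f x = (\<Sum>y\<in>V. 2 * (adj x y * f y) - \<beta> * ((if x = y then 1 else 0) * f y) - \<gamma> * f y)"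
    unfolding X_op_def X_def by (intro sum.cong refl) (simp add: algebra_simps)
  then show ?thesis
    using assms unfolding adj_op_def by (simp add: sum_subtractf sum_indicator_V flip: sum_distrib_left)
qed

lemma sum_X_op: "(\<Sum>x\<in>V. X_op f x) = 0"
proof -
  have "(\<Sum>x\<in>V. X_op f x) = (\<Sum>x\<in>V. 2 * adj_op f x - \<beta> * f x - \<gamma> * (\<Sum>y\<in>V. f y))"
    by (intro sum.cong refl) (simp add: X_op_eq)
  also have "\<dots> = (2 * real k - \<beta> - real n * \<gamma>) * (\<Sum>y\<in>V. f y)"
    using card_V by (simp add: sum_subtractf sum_adj_op algebra_simps flip: sum_distrib_left sum_distrib_right)
  finally show ?thesis using n_times_\<gamma> by simp
qed

lemma X_op_X_op:
  assumes "(\<Sum>x\<in>V. f x) = 0" "x \<in> V"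
  shows "X_op (X_op f) x = \<Delta> * f x"
proof -
  have "adj_op (X_op f) x = adj_op (\<lambda>y. 2 * adj_op f y - \<beta> * f y) x"
    using assms(1) by (intro adj_op_cong) (simp add: X_op_eq)
  also have "\<dots> = 2 * adj_op (adj_op f) x - \<beta> * adj_op f x"
    by (rule adj_op_linear)
  finally show ?thesis
    using X_op_eq[OF assms(2), of "X_op f"] X_op_eq[OF assms(2), of f] sum_X_op
      adj_op_adj_op[OF assms(2)] assms(1)
    unfolding \<Delta>_def \<beta>_def by (simp add: algebra_simps power2_eq_square)
qed

lemma X_cube:
  assumes "x \<in> V" "y \<in> V"
  shows "(\<Sum>z\<in>V. (\<Sum>w\<in>V. X x w * X w z) * X z y) = \<Delta> * X x y"
proof -
  define e where "e v = (if y = v then 1 else (0::real))" for v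
  have X_op_e: "X_op e w = X w y" for w
    unfolding X_op_def e_def using assms(2) finite_V by (simp add: if_distrib cong: if_cong)
  have "(\<Sum>z\<in>V. (\<Sum>w\<in>V. X x w * X w z) * X z y) = (\<Sum>w\<in>V. X x w * (\<Sum>z\<in>V. X w z * X z y))"
    by (simp add: sum_distrib_left sum_distrib_right mult.assoc) (rule sum.swap)
  also have "\<dots> = X_op (X_op (X_op e)) x"
    unfolding X_op_def[of "X_op (X_op e)"] X_op_def[of "X_op e"] X_op_e ..
  also have "\<dots> = \<Delta> * X x y"
    using X_op_X_op[OF sum_X_op assms(1)] X_op_e by simp
  finally show ?thesis .
qed

lemma trace_X: "(\<Sum>x\<in>V. X x x) = - (\<beta> * (real n - 1) + 2 * real k)"
  using card_V n_times_\<gamma> unfolding X_def by (simp add: algebra_simps)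

lemma conference_condition_if_sqrt_\<Delta>_notin_Ints:
  assumes "sqrt \<Delta> \<notin> \<int>"
  shows "\<beta> * (real n - 1) + 2 * real k = 0"
proof -
  obtain z :: int where z: "(\<Sum>x\<in>V. X x x) = of_int z * sqrt \<Delta>"
    using kernel_trace_cubic_relation[OF finite_V \<Delta>_pos X_cube] by blast
  define t where "t = - ((int l - int m) * (int n - 1) + 2 * int k)"
  have "of_int t = of_int z * sqrt \<Delta>"
    using z trace_X k_plus_2_le_n unfolding t_def \<beta>_def by simp
  then have "z = 0"
    using sqrt_in_Ints_if_rational_multiple[OF \<Delta>_in_Ints] \<Delta>_pos assms by fastforce
  then show ?thesis using z trace_X by simp
qed

lemma conference_parameters:
  assumes "\<beta> * (real n - 1) + 2 * real k = 0"
  shows "m = l + 1" "n = 2 * k + 1"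
proof -
  define b where "b = int l - int m"
  have "real_of_int (b * (int n - 1) + 2 * int k) = 0"
    using assms k_plus_2_le_n unfolding b_def \<beta>_def by simp
  then have conf: "b * (int n - 1) + 2 * int k = 0" by (simp only: of_int_eq_iff)
  have "k \<ge> 1" using m_le_k mu_pos by simp
  then have "b * (int n - 1) < 0" "int n - 1 > 0" using conf k_plus_2_le_n by simp_all
  then have "b < 0" by (simp add: mult_less_0_iff)
  moreover have "\<not> b \<le> - 2"
  proof
    assume "b \<le> - 2"
    then have "b * (int n - 1) \<le> - 2 * (int n - 1)" using k_plus_2_le_n by (intro mult_right_mono) auto
    then show False using conf k_plus_2_le_n by simp
  qed
  ultimately have "b = - 1" by simp
  then show "m = l + 1" "n = 2 * k + 1" using conf unfolding b_def by simp_all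
qed

lemma C5_parameters_if_\<sigma>_gt:
  assumes "\<sigma> > - 2"
  shows "n = 5 \<and> k = 2 \<and> l = 0 \<and> m = 1"
proof -
  have irrational: "sqrt \<Delta> \<notin> \<int>" using \<sigma>_le_if_sqrt_\<Delta>_in_Ints assms by force
  note conference = conference_parameters[OF conference_condition_if_sqrt_\<Delta>_notin_Ints[OF irrational]]
  then have \<beta>: "\<beta> = - 1" unfolding \<beta>_def by simp
  have "sqrt \<Delta> < 3" using assms \<beta> unfolding \<sigma>_def by simp
  then have "(sqrt \<Delta>)\<^sup>2 < 3\<^sup>2" using \<Delta>_pos by (intro power_strict_mono) auto
  then have "real k < real m + 2" using \<beta> \<Delta>_pos unfolding \<Delta>_def by simp
  moreover have "k \<noteq> m"
  proof
    assume "k = m"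
    then have "sqrt \<Delta> = 1" using \<beta> unfolding \<Delta>_def by simp
    then show False using irrational by simp
  qed
  ultimately have k: "k = l + 2" using m_le_k conference(1) by linarith
  have "int l * (int l + 2) = 0"
    using srg_parameter_identity unfolding k conference by (simp add: algebra_simps)
  then have "l = 0" by simp
  then show ?thesis using k conference by simp
qed

lemma parameters_if_is_C5:
  assumes "is_C5 V E"
  shows "k = 2 \<and> l = 0 \<and> m = 1"
proof -
  obtain \<phi> where bij: "bij_betw \<phi> V {0..4::int}"
    and adj_iff: "\<And>x y. x \<in> V \<Longrightarrow> y \<in> V \<Longrightarrow> E x y \<longleftrightarrow> (\<phi> x - \<phi> y) mod 5 \<in> {1, 4}"
    using assms unfolding is_C5_def by blast
  have "0 \<in> \<phi> ` V" "1 \<in> \<phi> ` V" "2 \<in> \<phi> ` V" using bij unfolding bij_betw_def by auto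
  then obtain v0 v1 v2 where v: "v0 \<in> V" "v1 \<in> V" "v2 \<in> V" "\<phi> v0 = 0" "\<phi> v1 = 1" "\<phi> v2 = 2"
    unfolding image_iff by metis
  have range: "{0..4::int} = {0, 1, 2, 3, 4}" by auto
  have "card {y\<in>V. E v0 y} = card {y\<in>V. (0 - \<phi> y) mod 5 \<in> {1, 4}}"
    using v adj_iff by (intro arg_cong[of _ _ card]) auto
  also have "\<dots> = card {j\<in>{0..4::int}. (0 - j) mod 5 \<in> {1, 4}}"
    by (rule card_filter_bij_betw[OF bij])
  also have "{j\<in>{0..4::int}. (0 - j) mod 5 \<in> {1, 4}} = {1, 4}" unfolding range by auto
  finally have "k = 2" using card_neighbours[OF v(1)] by simp
  have "E v0 v1" "\<not> E v0 v2" "v0 \<noteq> v2" using v adj_iff by auto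
  have "card {z\<in>V. E v0 z \<and> E z v1}
      = card {z\<in>V. (0 - \<phi> z) mod 5 \<in> {1, 4} \<and> (\<phi> z - 1) mod 5 \<in> {1, 4}}"
    using v adj_iff by (intro arg_cong[of _ _ card]) auto
  also have "\<dots> = card {j\<in>{0..4::int}. (0 - j) mod 5 \<in> {1, 4} \<and> (j - 1) mod 5 \<in> {1, 4}}"
    by (rule card_filter_bij_betw[OF bij])
  also have "{j\<in>{0..4::int}. (0 - j) mod 5 \<in> {1, 4} \<and> (j - 1) mod 5 \<in> {1, 4}} = {}"
    unfolding range by auto
  finally have "l = 0"
    using card_common_neighbours_adj[OF v(1,2) \<open>E v0 v1\<close>] by simp
  have "card {z\<in>V. E v0 z \<and> E z v2}
      = card {z\<in>V. (0 - \<phi> z) mod 5 \<in> {1, 4} \<and> (\<phi> z - 2) mod 5 \<in> {1, 4}}"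
    using v adj_iff by (intro arg_cong[of _ _ card]) auto
  also have "\<dots> = card {j\<in>{0..4::int}. (0 - j) mod 5 \<in> {1, 4} \<and> (j - 2) mod 5 \<in> {1, 4}}"
    by (rule card_filter_bij_betw[OF bij])
  also have "{j\<in>{0..4::int}. (0 - j) mod 5 \<in> {1, 4} \<and> (j - 2) mod 5 \<in> {1, 4}} = {1}"
    unfolding range by auto
  finally have "m = 1"
    using card_common_neighbours_nonadj[OF v(1,3) \<open>v0 \<noteq> v2\<close> \<open>\<not> E v0 v2\<close>] by simp
  show ?thesis using \<open>k = 2\<close> \<open>l = 0\<close> \<open>m = 1\<close> by simp
qed

lemma no_triangle:
  assumes "l = 0" "E x y" "E y z"
  shows "\<not> E x z"
proof
  assume "E x z"
  then have "card {w\<in>V. E x w \<and> E w z} = 0"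
    using assms(1) E_in_V card_common_neighbours_adj by blast
  then have "{w\<in>V. E x w \<and> E w z} = {}" using finite_V by simp
  then show False using assms(2,3) E_in_V by blast
qed

lemma unique_common_neighbour:
  assumes "m = 1" "x \<in> V" "y \<in> V" "x \<noteq> y" "\<not> E x y"
    and "E x a" "E a y" "E x b" "E b y"
  shows "a = b"
proof -
  have "{a, b} \<subseteq> {z\<in>V. E x z \<and> E z y}" using assms(6-9) E_in_V by blast
  then have "card {a, b} \<le> card {z\<in>V. E x z \<and> E z y}" using finite_V by (intro card_mono) auto
  also have "\<dots> = 1" using card_common_neighbours_nonadj[OF assms(2-5)] assms(1) by simp
  finally show ?thesis by (cases "a = b") auto
qed

lemma other_neighbour:
  assumes "k = 2" "E x a"
  obtains b where "E x b" "b \<noteq> a"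
proof -
  have "card ({y\<in>V. E x y} - {a}) = 1"
    using assms E_in_V card_neighbours by (simp add: card_Diff_singleton)
  then obtain b where "{y\<in>V. E x y} - {a} = {b}" by (auto simp: card_1_singleton_iff)
  then show ?thesis using that by blast
qed

lemma neighbour_cases:
  assumes "k = 2" "E x a" "E x b" "a \<noteq> b" "E x c"
  shows "c = a \<or> c = b"
proof -
  have "{a, b} \<subseteq> {y\<in>V. E x y}" using assms(2,3) E_in_V by blast
  moreover have "card {y\<in>V. E x y} = card {a, b}"
    using assms(1,2,4) E_in_V card_neighbours by simp
  ultimately have "{y\<in>V. E x y} = {a, b}" using finite_V by (intro card_subset_eq[symmetric]) auto
  then show ?thesis using assms(5) E_in_V by blast
qed

lemma five_cycle:
  assumes "n = 5" "k = 2" "l = 0" "m = 1"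
  obtains x\<^sub>0 x\<^sub>1 x\<^sub>2 x\<^sub>3 x\<^sub>4 where "distinct [x\<^sub>0, x\<^sub>1, x\<^sub>2, x\<^sub>3, x\<^sub>4]" "V = {x\<^sub>0, x\<^sub>1, x\<^sub>2, x\<^sub>3, x\<^sub>4}"
    "E x\<^sub>0 x\<^sub>1" "E x\<^sub>1 x\<^sub>2" "E x\<^sub>2 x\<^sub>3" "E x\<^sub>3 x\<^sub>4" "E x\<^sub>4 x\<^sub>0"
proof -
  note triangle = no_triangle[OF assms(3)]
  note unique = unique_common_neighbour[OF assms(4)]
  obtain x\<^sub>0 x\<^sub>1 where "x\<^sub>0 \<in> V" "x\<^sub>1 \<in> V" "E x\<^sub>0 x\<^sub>1" by (rule ex_edge)
  obtain x\<^sub>4 where "E x\<^sub>0 x\<^sub>4" "x\<^sub>4 \<noteq> x\<^sub>1" using other_neighbour[OF assms(2) \<open>E x\<^sub>0 x\<^sub>1\<close>] .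
  have "E x\<^sub>1 x\<^sub>0" "E x\<^sub>4 x\<^sub>0" using \<open>E x\<^sub>0 x\<^sub>1\<close> \<open>E x\<^sub>0 x\<^sub>4\<close> E_sym by blast+
  obtain x\<^sub>2 where "E x\<^sub>1 x\<^sub>2" "x\<^sub>2 \<noteq> x\<^sub>0" using other_neighbour[OF assms(2) \<open>E x\<^sub>1 x\<^sub>0\<close>] .
  obtain x\<^sub>3 where "E x\<^sub>4 x\<^sub>3" "x\<^sub>3 \<noteq> x\<^sub>0" using other_neighbour[OF assms(2) \<open>E x\<^sub>4 x\<^sub>0\<close>] .
  have in_V: "x\<^sub>1 \<in> V" "x\<^sub>2 \<in> V" "x\<^sub>3 \<in> V" "x\<^sub>4 \<in> V"
    using E_in_V \<open>E x\<^sub>0 x\<^sub>1\<close> \<open>E x\<^sub>1 x\<^sub>2\<close> \<open>E x\<^sub>4 x\<^sub>3\<close> \<open>E x\<^sub>0 x\<^sub>4\<close> by blast+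
  have "\<not> E x\<^sub>1 x\<^sub>4" "\<not> E x\<^sub>4 x\<^sub>1" "\<not> E x\<^sub>0 x\<^sub>2"
    using triangle \<open>E x\<^sub>1 x\<^sub>0\<close> \<open>E x\<^sub>0 x\<^sub>4\<close> \<open>E x\<^sub>4 x\<^sub>0\<close> \<open>E x\<^sub>0 x\<^sub>1\<close> \<open>E x\<^sub>1 x\<^sub>2\<close> by blast+
  have common: "a = x\<^sub>0" if "E x\<^sub>1 a" "E a x\<^sub>4" for a
    using unique[OF in_V(1,4) \<open>x\<^sub>4 \<noteq> x\<^sub>1\<close>[symmetric] \<open>\<not> E x\<^sub>1 x\<^sub>4\<close> that]
      \<open>E x\<^sub>1 x\<^sub>0\<close> \<open>E x\<^sub>0 x\<^sub>4\<close> by blast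
  have "x\<^sub>2 \<noteq> x\<^sub>3"
    using common[of x\<^sub>2] \<open>E x\<^sub>1 x\<^sub>2\<close> \<open>E x\<^sub>4 x\<^sub>3\<close> \<open>x\<^sub>2 \<noteq> x\<^sub>0\<close> E_sym by blast
  then have distinct: "distinct [x\<^sub>0, x\<^sub>1, x\<^sub>2, x\<^sub>3, x\<^sub>4]"
    using \<open>E x\<^sub>0 x\<^sub>1\<close> \<open>E x\<^sub>1 x\<^sub>2\<close> \<open>E x\<^sub>4 x\<^sub>3\<close> \<open>E x\<^sub>0 x\<^sub>4\<close> \<open>\<not> E x\<^sub>1 x\<^sub>4\<close> \<open>\<not> E x\<^sub>4 x\<^sub>1\<close>
      \<open>x\<^sub>4 \<noteq> x\<^sub>1\<close> \<open>x\<^sub>2 \<noteq> x\<^sub>0\<close> \<open>x\<^sub>3 \<noteq> x\<^sub>0\<close> E_irrefl by auto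
  have V: "V = {x\<^sub>0, x\<^sub>1, x\<^sub>2, x\<^sub>3, x\<^sub>4}"
  proof (rule card_subset_eq[OF finite_V, symmetric])
    show "{x\<^sub>0, x\<^sub>1, x\<^sub>2, x\<^sub>3, x\<^sub>4} \<subseteq> V" using \<open>x\<^sub>0 \<in> V\<close> in_V by simp
    show "card {x\<^sub>0, x\<^sub>1, x\<^sub>2, x\<^sub>3, x\<^sub>4} = card V"
      using distinct card_V assms(1) by (simp add: distinct_card[symmetric])
  qed
  obtain w where "E x\<^sub>2 w" "w \<noteq> x\<^sub>1"
    using other_neighbour[OF assms(2), of x\<^sub>2 x\<^sub>1] \<open>E x\<^sub>1 x\<^sub>2\<close> E_sym by blast
  moreover have "w \<noteq> x\<^sub>0" "w \<noteq> x\<^sub>2" "w \<in> V"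
    using \<open>\<not> E x\<^sub>0 x\<^sub>2\<close> \<open>E x\<^sub>2 w\<close> E_sym E_irrefl E_in_V by blast+
  moreover have "w \<noteq> x\<^sub>4" using common[of x\<^sub>2] \<open>E x\<^sub>1 x\<^sub>2\<close> \<open>E x\<^sub>2 w\<close> \<open>x\<^sub>2 \<noteq> x\<^sub>0\<close> by blast
  ultimately have "E x\<^sub>2 x\<^sub>3" unfolding V by blast
  then show ?thesis
    using that distinct V \<open>E x\<^sub>0 x\<^sub>1\<close> \<open>E x\<^sub>1 x\<^sub>2\<close> \<open>E x\<^sub>4 x\<^sub>3\<close> \<open>E x\<^sub>4 x\<^sub>0\<close> E_sym by blast
qed

lemma is_C5_if_five_cycle:
  assumes "k = 2" "distinct [x\<^sub>0, x\<^sub>1, x\<^sub>2, x\<^sub>3, x\<^sub>4]" and V: "V = {x\<^sub>0, x\<^sub>1, x\<^sub>2, x\<^sub>3, x\<^sub>4}"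
    and "E x\<^sub>0 x\<^sub>1" "E x\<^sub>1 x\<^sub>2" "E x\<^sub>2 x\<^sub>3" "E x\<^sub>3 x\<^sub>4" "E x\<^sub>4 x\<^sub>0"
  shows "is_C5 V E"
proof -
  have edges: "E x\<^sub>1 x\<^sub>0" "E x\<^sub>2 x\<^sub>1" "E x\<^sub>3 x\<^sub>2" "E x\<^sub>4 x\<^sub>3" "E x\<^sub>0 x\<^sub>4"
    using assms(4-8) E_sym by blast+
  have non_edges: "\<not> E x\<^sub>0 x\<^sub>2" "\<not> E x\<^sub>0 x\<^sub>3" "\<not> E x\<^sub>1 x\<^sub>3" "\<not> E x\<^sub>1 x\<^sub>4" "\<not> E x\<^sub>2 x\<^sub>4"
    using neighbour_cases[OF assms(1) assms(4) edges(5)] neighbour_cases[OF assms(1) assms(5) edges(1)]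
      neighbour_cases[OF assms(1) assms(6) edges(2)] assms(2) by auto
  then have non_edges': "\<not> E x\<^sub>2 x\<^sub>0" "\<not> E x\<^sub>3 x\<^sub>0" "\<not> E x\<^sub>3 x\<^sub>1" "\<not> E x\<^sub>4 x\<^sub>1" "\<not> E x\<^sub>4 x\<^sub>2"
    using E_sym by blast+
  define \<phi> where "\<phi> v = (if v = x\<^sub>0 then 0 else if v = x\<^sub>1 then 1 else if v = x\<^sub>2 then 2
    else if v = x\<^sub>3 then 3 else (4::int))" for v
  have \<phi>: "\<phi> x\<^sub>0 = 0" "\<phi> x\<^sub>1 = 1" "\<phi> x\<^sub>2 = 2" "\<phi> x\<^sub>3 = 3" "\<phi> x\<^sub>4 = 4"
    using assms(2) unfolding \<phi>_def by auto
  have "bij_betw \<phi> V {0..4}"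
  proof (rule bij_betw_imageI)
    show "inj_on \<phi> V" unfolding V inj_on_def using \<phi> by auto
    show "\<phi> ` V = {0..4}" unfolding V using \<phi> by auto
  qed
  moreover have "E x y \<longleftrightarrow> (\<phi> x - \<phi> y) mod 5 \<in> {1, 4}" if "x \<in> V" "y \<in> V" for x y
    using that assms(4-8) edges non_edges non_edges' E_irrefl \<phi> unfolding V by auto
  ultimately show ?thesis unfolding is_C5_def by blast
qed

lemma is_C5_if_parameters:
  assumes "n = 5" "k = 2" "l = 0" "m = 1"
  shows "is_C5 V E"
proof -
  obtain x\<^sub>0 x\<^sub>1 x\<^sub>2 x\<^sub>3 x\<^sub>4 where "distinct [x\<^sub>0, x\<^sub>1, x\<^sub>2, x\<^sub>3, x\<^sub>4]" "V = {x\<^sub>0, x\<^sub>1, x\<^sub>2, x\<^sub>3, x\<^sub>4}"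
    "E x\<^sub>0 x\<^sub>1" "E x\<^sub>1 x\<^sub>2" "E x\<^sub>2 x\<^sub>3" "E x\<^sub>3 x\<^sub>4" "E x\<^sub>4 x\<^sub>0"
    by (rule five_cycle[OF assms])
  then show ?thesis by (rule is_C5_if_five_cycle[OF assms(2)])
qed

end

theorem theorem1p3:
  fixes V :: "'a set" and E :: "'a \<Rightarrow> 'a \<Rightarrow> bool" and n k l m :: nat
  assumes "srg V E n k l m"
    and "m \<ge> 1"
    and "\<exists>x\<in>V. \<exists>y\<in>V. x \<noteq> y \<and> \<not> E x y"
  shows "(\<not> is_C5 V E \<longrightarrow> QEC V E \<ge> 0)
       \<and> (is_C5 V E \<longrightarrow> QEC V E = - (3 - sqrt 5) / 2)"
proof -
  interpret connected_srg V E n k l m using assms by unfold_locales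
  show ?thesis
  proof (intro conjI impI)
    assume "\<not> is_C5 V E"
    then have "\<not> \<sigma> > - 2" using C5_parameters_if_\<sigma>_gt is_C5_if_parameters by blast
    then show "QEC V E \<ge> 0" using QEC_eq by simp
  next
    assume "is_C5 V E"
    then have "\<sigma> = (- 1 - sqrt 5) / 2"
      using parameters_if_is_C5 unfolding \<sigma>_def \<Delta>_def \<beta>_def by simp
    then show "QEC V E = - (3 - sqrt 5) / 2" using QEC_eq by simp
  qed
qed

end
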